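(* For every non-empty partial metric space $(X,p_X)$ there exists a p-Cauchy completion $(\tilde X,i)$ of $X$ such that $i(X)$ is not symmetrically dense in $\tilde X$.
   Context: A partial metric on a set $X$ is a function $p_X\colon X\times X\to\mathbb{R}_{\geq0}$ such that for all $x,y,z\in X$: (P1) $p_X(x,x)=p_X(x,y)=p_X(y,y)$ implies $x=y$; (P2) $p_X(x,x)\leq p_X(x,y)$; (P3) $p_X(x,y)=p_X(y,x)$; (P4) $p_X(x,z)+p_X(y,y)\leq p_X(x,y)+p_X(y,z)$. For $x\in X$ and $\varepsilon>0$, $B_\varepsilon(x)=\{y\in X: p_X(x,y)<p_X(x,x)+\varepsilon\}$. A subset $A\subseteq X$ is dense in $X$ if for every $x\in X$ and $\varepsilon>0$ there is $y\in A$ with $y\in B_\varepsilon(x)$; it is symmetrically dense if for every $x\in X$ and $\varepsilon>0$ there is $y\in A$ with $x\in B_\varepsilon(y)$ and $y\in B_\varepsilon(x)$. A sequence $(x_n)$ in $X$ p-converges to $x\in X$ if $p_X(x,x)=\lim_{n\to\infty}p_X(x,x_n)=\lim_{n\to\infty}p_X(x_n,x_n)$; it is p-Cauchy if $\lim_{n,m\to\infty}p_X(x_n,x_m)$ exists and is finite. $X$ is p-Cauchy complete if every p-Cauchy sequence p-converges. An isometric embedding $i\colon X\to Y$ between partial metric spaces is a map with $p_Y(i(x),i(y))=p_X(x,y)$ for all $x,y$. A p-Cauchy completion of $X$ is a pair $(\bar X,i)$ where $\bar X$ is a p-Cauchy complete partial metric space and $i\colon X\to\bar X$ is an isometric embedding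 with $i(X)$ dense in $\bar X$. *)

theory Defs
  imports Complex_Main
begin

definition partial_metric :: "'a set \<Rightarrow> ('a \<Rightarrow> 'a \<Rightarrow> real) \<Rightarrow> bool" where
  "partial_metric X p \<longleftrightarrow>
     (\<forall>x\<in>X. \<forall>y\<in>X. 0 \<le> p x y) \<and>
     (\<forall>x\<in>X. \<forall>y\<in>X. p x x = p x y \<and> p x y = p y y \<longrightarrow> x = y) \<and>
     (\<forall>x\<in>X. \<forall>y\<in>X. p x x \<le> p x y) \<and>
     (\<forall>x\<in>X. \<forall>y\<in>X. p x y = p y x) \<and>
     (\<forall>x\<in>X. \<forall>y\<in>X. \<forall>z\<in>X. p x z + p y y \<le> p x y + p y z)"

definition pball :: "'a set \<Rightarrow> ('a \<Rightarrow> 'a \<Rightarrow> real) \<Rightarrow> 'a \<Rightarrow> real \<Rightarrow> 'a set" where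
  "pball X p x \<epsilon> = {y\<in>X. p x y < p x x + \<epsilon>}"

definition p_dense :: "'a set \<Rightarrow> ('a \<Rightarrow> 'a \<Rightarrow> real) \<Rightarrow> 'a set \<Rightarrow> bool" where
  "p_dense X p A \<longleftrightarrow> A \<subseteq> X \<and>
     (\<forall>x\<in>X. \<forall>\<epsilon>>0. \<exists>y\<in>A. y \<in> pball X p x \<epsilon>)"

definition p_sym_dense :: "'a set \<Rightarrow> ('a \<Rightarrow> 'a \<Rightarrow> real) \<Rightarrow> 'a set \<Rightarrow> bool" where
  "p_sym_dense X p A \<longleftrightarrow> A \<subseteq> X \<and>
     (\<forall>x\<in>X. \<forall>\<epsilon>>0. \<exists>y\<in>A. x \<in> pball X p y \<epsilon> \<and> y \<in> pball X p x \<epsilon>)"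

definition p_converges :: "('a \<Rightarrow> 'a \<Rightarrow> real) \<Rightarrow> (nat \<Rightarrow> 'a) \<Rightarrow> 'a \<Rightarrow> bool" where
  "p_converges p s x \<longleftrightarrow>
     (\<lambda>n. p x (s n)) \<longlonglongrightarrow> p x x \<and> (\<lambda>n. p (s n) (s n)) \<longlonglongrightarrow> p x x"

definition p_Cauchy :: "('a \<Rightarrow> 'a \<Rightarrow> real) \<Rightarrow> (nat \<Rightarrow> 'a) \<Rightarrow> bool" where
  "p_Cauchy p s \<longleftrightarrow>
     (\<exists>L::real. \<forall>\<epsilon>>0. \<exists>N. \<forall>n\<ge>N. \<forall>m\<ge>N. \<bar>p (s n) (s m) - L\<bar> < \<epsilon>)"

definition p_Cauchy_complete :: "'a set \<Rightarrow> ('a \<Rightarrow> 'a \<Rightarrow> real) \<Rightarrow> bool" where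
  "p_Cauchy_complete X p \<longleftrightarrow>
     (\<forall>s. (\<forall>n. s n \<in> X) \<and> p_Cauchy p s \<longrightarrow> (\<exists>x\<in>X. p_converges p s x))"

definition isometric_embedding ::
  "'a set \<Rightarrow> ('a \<Rightarrow> 'a \<Rightarrow> real) \<Rightarrow> 'b set \<Rightarrow> ('b \<Rightarrow> 'b \<Rightarrow> real) \<Rightarrow> ('a \<Rightarrow> 'b) \<Rightarrow> bool" where
  "isometric_embedding X p Y q i \<longleftrightarrow>
     i ` X \<subseteq> Y \<and> (\<forall>x\<in>X. \<forall>y\<in>X. q (i x) (i y) = p x y)"

definition p_Cauchy_completion ::
  "'a set \<Rightarrow> ('a \<Rightarrow> 'a \<Rightarrow> real) \<Rightarrow> 'b set \<Rightarrow> ('b \<Rightarrow> 'b \<Rightarrow> real) \<Rightarrow> ('a \<Rightarrow> 'b) \<Rightarrow> bool" where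
  "p_Cauchy_completion X p Y q i \<longleftrightarrow>
     partial_metric Y q \<and> p_Cauchy_complete Y q \<and>
     isometric_embedding X p Y q i \<and> p_dense Y q (i ` X)"

end

(*
  The p-Cauchy completion Y of X is built as usual from p-Cauchy sequences s, t, with
  distance lim p(s n, t n), identified when this distance equals both lim p(s n, s n) and
  lim p(t n, t n). Doubling it to Y \<times> {0, 1}, with distance q(a, b) + max(k, l) between (a, k)
  and (b, l), gives another p-Cauchy completion of X, in which X sits in the lower layer.
  Every point of the upper layer is still approached by X in the sense of density, since
  max(1, 0) = 1 = max(1, 1); but from a point (b, 0) the point (a, 1) has distance
  q(b, a) + 1 \<ge> q(b, b) + 1, so no ball of radius 1 around a point of X contains it, and X
  is not symmetrically dense.
*)
theory Submission
  imports Defs "HOL-Analysis.Elementary_Normed_Spaces"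
begin

lemma partial_metric_nonneg: "partial_metric X p \<Longrightarrow> x \<in> X \<Longrightarrow> y \<in> X \<Longrightarrow> 0 \<le> p x y"
  unfolding partial_metric_def by blast

lemma partial_metric_eqI:
  "partial_metric X p \<Longrightarrow> x \<in> X \<Longrightarrow> y \<in> X \<Longrightarrow> p x x = p x y \<Longrightarrow> p x y = p y y \<Longrightarrow> x = y"
  unfolding partial_metric_def by blast

lemma partial_metric_self_le: "partial_metric X p \<Longrightarrow> x \<in> X \<Longrightarrow> y \<in> X \<Longrightarrow> p x x \<le> p x y"
  unfolding partial_metric_def by blast

lemma partial_metric_sym: "partial_metric X p \<Longrightarrow> x \<in> X \<Longrightarrow> y \<in> X \<Longrightarrow> p x y = p y x"
  unfolding partial_metric_def by blast

lemma partial_metric_triangle: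
  "partial_metric X p \<Longrightarrow> x \<in> X \<Longrightarrow> y \<in> X \<Longrightarrow> z \<in> X \<Longrightarrow> p x z + p y y \<le> p x y + p y z"
  unfolding partial_metric_def by blast

lemma partial_metric_subset: "partial_metric X p \<Longrightarrow> Y \<subseteq> X \<Longrightarrow> partial_metric Y p"
  unfolding partial_metric_def by blast

definition induced_metric :: "('a \<Rightarrow> 'a \<Rightarrow> real) \<Rightarrow> 'a \<Rightarrow> 'a \<Rightarrow> real" where
  "induced_metric p x y = 2 * p x y - p x x - p y y"

lemma abs_diff_le_induced_metric:
  assumes "partial_metric X p" "a \<in> X" "b \<in> X" "c \<in> X"
  shows "\<bar>p a c - p b c\<bar> \<le> induced_metric p a b"
  using partial_metric_triangle[OF assms(1,3,2,4)] partial_metric_triangle[OF assms(1,2,3,4)]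
    partial_metric_self_le[OF assms(1,2,3)] partial_metric_self_le[OF assms(1,3,2)]
    partial_metric_sym[OF assms(1,2,3)]
  unfolding induced_metric_def by linarith

lemma abs_diff_self_le_induced_metric:
  assumes "partial_metric X p" "a \<in> X" "b \<in> X"
  shows "\<bar>p a a - p b b\<bar> \<le> induced_metric p a b"
  using partial_metric_self_le[OF assms(1,2,3)] partial_metric_self_le[OF assms(1,3,2)]
    partial_metric_sym[OF assms(1,2,3)]
  unfolding induced_metric_def by linarith

lemma p_Cauchy_iff_tendsto:
  "p_Cauchy p s \<longleftrightarrow> (\<exists>L. ((\<lambda>(n, m). p (s n) (s m)) \<longlongrightarrow> L) (sequentially \<times>\<^sub>F sequentially))"
  unfolding p_Cauchy_def tendsto_iff eventually_prod_sequentially dist_real_def by fast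

lemma tendsto_diagonal:
  assumes "(f \<longlongrightarrow> L) (sequentially \<times>\<^sub>F sequentially)"
  shows "(\<lambda>n. f (n, n)) \<longlonglongrightarrow> L"
  using filterlim_compose[OF assms filterlim_Pair[OF filterlim_ident filterlim_ident]] by simp

lemma Cauchy_if_tendsto_diff:
  fixes f :: "nat \<Rightarrow> real"
  assumes "((\<lambda>(m, n). f m - f n) \<longlongrightarrow> 0) (sequentially \<times>\<^sub>F sequentially)"
  shows "Cauchy f"
  using assms unfolding Cauchy_iff tendsto_iff eventually_prod_sequentially dist_real_def by fastforce

lemma tendsto_induced_metric_p_Cauchy:
  assumes "p_Cauchy p s"
  shows "((\<lambda>(n, m). induced_metric p (s n) (s m)) \<longlongrightarrow> 0) (sequentially \<times>\<^sub>F sequentially)"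
proof -
  obtain L where L: "((\<lambda>(n, m). p (s n) (s m)) \<longlongrightarrow> L) (sequentially \<times>\<^sub>F sequentially)"
    using assms p_Cauchy_iff_tendsto by blast
  have diag: "(\<lambda>n. p (s n) (s n)) \<longlonglongrightarrow> L"
    using tendsto_diagonal[OF L] by simp
  have "((\<lambda>nm. 2 * p (s (fst nm)) (s (snd nm)) - p (s (fst nm)) (s (fst nm)) - p (s (snd nm)) (s (snd nm)))
          \<longlongrightarrow> 2 * L - L - L) (sequentially \<times>\<^sub>F sequentially)"
    using L filterlim_compose[OF diag filterlim_fst] filterlim_compose[OF diag filterlim_snd]
    by (intro tendsto_intros) (simp_all add: case_prod_beta')
  then show ?thesis
    by (simp add: induced_metric_def case_prod_beta')
qed

lemma tendsto_0_if_abs_le: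
  fixes f h :: "'a \<Rightarrow> real"
  assumes "\<And>x. \<bar>f x\<bar> \<le> h x" "(h \<longlongrightarrow> 0) F"
  shows "(f \<longlongrightarrow> 0) F"
  using Lim_null_comparison[of f h F] assms by (simp add: always_eventually)

lemma tendsto_if_abs_diff_le:
  fixes f g h :: "'a \<Rightarrow> real"
  assumes "\<And>x. \<bar>f x - g x\<bar> \<le> h x" "(h \<longlongrightarrow> 0) F" "(g \<longlongrightarrow> L) F"
  shows "(f \<longlongrightarrow> L) F"
  using Lim_transform[OF assms(3) tendsto_0_if_abs_le[OF assms(1,2)]] .

lemma tendsto_induced_metric_p_converges:
  assumes "p_converges p s y"
  shows "(\<lambda>n. induced_metric p y (s n)) \<longlonglongrightarrow> 0"
proof -
  have "(\<lambda>n. 2 * p y (s n) - p y y - p (s n) (s n)) \<longlonglongrightarrow> 2 * p y y - p y y - p y y"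
    using assms unfolding p_converges_def by (intro tendsto_intros) auto
  then show ?thesis by (simp add: induced_metric_def)
qed

context
  fixes Y q and a b :: "nat \<Rightarrow> 'a"
  assumes pm: "partial_metric Y q" and a: "\<And>k. a k \<in> Y" and b: "\<And>k. b k \<in> Y"
    and close: "(\<lambda>k. induced_metric q (a k) (b k)) \<longlonglongrightarrow> 0"
begin

lemma p_Cauchy_transfer:
  assumes "p_Cauchy q a"
  shows "p_Cauchy q b"
proof -
  obtain L where L: "((\<lambda>(n, m). q (a n) (a m)) \<longlongrightarrow> L) (sequentially \<times>\<^sub>F sequentially)"
    using assms p_Cauchy_iff_tendsto by blast
  let ?h = "\<lambda>k. induced_metric q (a k) (b k)"
  have "\<bar>q (b n) (b m) - q (a n) (a m)\<bar> \<le> ?h n + ?h m" for n m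
    using abs_diff_le_induced_metric[OF pm a b b, of n m n] abs_diff_le_induced_metric[OF pm a b a, of m n m]
      partial_metric_sym[OF pm a b, of n m] partial_metric_sym[OF pm a a, of n m] by linarith
  moreover have "((\<lambda>(n, m). ?h n + ?h m) \<longlongrightarrow> 0) (sequentially \<times>\<^sub>F sequentially)"
    using tendsto_add[OF filterlim_compose[OF close filterlim_fst] filterlim_compose[OF close filterlim_snd]]
    by (simp add: case_prod_beta')
  ultimately have "((\<lambda>(n, m). q (b n) (b m)) \<longlongrightarrow> L) (sequentially \<times>\<^sub>F sequentially)"
    by (intro tendsto_if_abs_diff_le[OF _ _ L]) auto
  then show ?thesis using p_Cauchy_iff_tendsto by blast
qed

lemma p_converges_transfer:
  assumes "y \<in> Y" "p_converges q b y"
  shows "p_converges q a y"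
proof -
  have dist: "\<bar>q y (a k) - q y (b k)\<bar> \<le> induced_metric q (a k) (b k)" for k
    using abs_diff_le_induced_metric[OF pm a b assms(1), of k k]
      partial_metric_sym[OF pm assms(1) a] partial_metric_sym[OF pm assms(1) b] by simp
  have self: "\<bar>q (a k) (a k) - q (b k) (b k)\<bar> \<le> induced_metric q (a k) (b k)" for k
    using abs_diff_self_le_induced_metric[OF pm a b] .
  show ?thesis
    using assms(2) tendsto_if_abs_diff_le[OF dist close] tendsto_if_abs_diff_le[OF self close]
    unfolding p_converges_def by blast
qed

end

lemma p_Cauchy_completeI:
  assumes pm: "partial_metric Y q" and "D \<subseteq> Y"
    and approx: "\<And>y. y \<in> Y \<Longrightarrow> \<exists>s. range s \<subseteq> D \<and> p_converges q s y"
    and conv: "\<And>s. range s \<subseteq> D \<Longrightarrow> p_Cauchy q s \<Longrightarrow> \<exists>y\<in>Y. p_converges q s y"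
  shows "p_Cauchy_complete Y q"
  unfolding p_Cauchy_complete_def
proof (intro allI impI)
  fix a assume "(\<forall>n. a n \<in> Y) \<and> p_Cauchy q a"
  then have aY: "\<And>k. a k \<in> Y" and "p_Cauchy q a" by auto
  \<comment> \<open>Diagonal argument: shadow \<open>a\<close> by a sequence in \<open>D\<close> asymptotically close to it.\<close>
  have "\<exists>x\<in>D. \<bar>induced_metric q (a k) x\<bar> < inverse (real (Suc k))" for k
  proof -
    obtain s where "range s \<subseteq> D" "p_converges q s (a k)" using approx[OF aY] by blast
    moreover obtain N where "\<forall>n\<ge>N. \<bar>induced_metric q (a k) (s n)\<bar> < inverse (real (Suc k))"
      using tendsto_induced_metric_p_converges[OF calculation(2)] unfolding LIMSEQ_iff
      by (metis diff_zero inverse_positive_iff_positive of_nat_0_less_iff real_norm_def zero_less_Suc)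
    ultimately show ?thesis by blast
  qed
  then obtain b where bD: "\<And>k. b k \<in> D" and b: "\<And>k. \<bar>induced_metric q (a k) (b k)\<bar> < inverse (real (Suc k))"
    by metis
  have bY: "\<And>k. b k \<in> Y" using bD \<open>D \<subseteq> Y\<close> by blast
  have close: "(\<lambda>k. induced_metric q (a k) (b k)) \<longlonglongrightarrow> 0"
    using b by (intro Lim_null_comparison[OF _ LIMSEQ_inverse_real_of_nat]) (simp add: less_imp_le)
  have "p_Cauchy q b" by (rule p_Cauchy_transfer[OF pm aY bY close \<open>p_Cauchy q a\<close>])
  then obtain y where "y \<in> Y" "p_converges q b y" using conv bD by blast
  then show "\<exists>y\<in>Y. p_converges q a y" using p_converges_transfer[OF pm aY bY close] by blast
qed

section \<open>The completion by classes of p-Cauchy sequences\<close>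

definition p_Cauchy_seqs :: "'a set \<Rightarrow> ('a \<Rightarrow> 'a \<Rightarrow> real) \<Rightarrow> (nat \<Rightarrow> 'a) set" where
  "p_Cauchy_seqs X p = {s. (\<forall>n. s n \<in> X) \<and> p_Cauchy p s}"

definition limit_dist :: "('a \<Rightarrow> 'a \<Rightarrow> real) \<Rightarrow> (nat \<Rightarrow> 'a) \<Rightarrow> (nat \<Rightarrow> 'a) \<Rightarrow> real" where
  "limit_dist p s t = lim (\<lambda>n. p (s n) (t n))"

lemma p_Cauchy_seqsD: "s \<in> p_Cauchy_seqs X p \<Longrightarrow> s n \<in> X"
  unfolding p_Cauchy_seqs_def by blast

lemma const_in_p_Cauchy_seqs: "x \<in> X \<Longrightarrow> (\<lambda>_. x) \<in> p_Cauchy_seqs X p"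
  unfolding p_Cauchy_seqs_def p_Cauchy_def by (auto intro: exI[of _ "p x x"])

lemma limit_dist_const: "limit_dist p (\<lambda>_. x) (\<lambda>_. y) = p x y"
  unfolding limit_dist_def by simp

lemma tendsto_limit_dist_self:
  assumes "p_Cauchy p s"
  shows "((\<lambda>(n, m). p (s n) (s m)) \<longlongrightarrow> limit_dist p s s) (sequentially \<times>\<^sub>F sequentially)"
proof -
  obtain L where L: "((\<lambda>(n, m). p (s n) (s m)) \<longlongrightarrow> L) (sequentially \<times>\<^sub>F sequentially)"
    using assms p_Cauchy_iff_tendsto by blast
  then have "limit_dist p s s = L"
    unfolding limit_dist_def using tendsto_diagonal[OF L] by (simp add: limI)
  with L show ?thesis by simp
qed

lemma tendsto_limit_dist:
  assumes pm: "partial_metric X p" and s: "s \<in> p_Cauchy_seqs X p" and t: "t \<in> p_Cauchy_seqs X p"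
  shows "(\<lambda>n. p (s n) (t n)) \<longlonglongrightarrow> limit_dist p s t"
proof -
  note sX = p_Cauchy_seqsD[OF s] and tX = p_Cauchy_seqsD[OF t]
  let ?d = "\<lambda>(m, n). induced_metric p (s m) (s n) + induced_metric p (t m) (t n)"
  have bound: "\<bar>p (s m) (t m) - p (s n) (t n)\<bar> \<le> induced_metric p (s m) (s n) + induced_metric p (t m) (t n)"
    for m n
    using abs_diff_le_induced_metric[OF pm sX sX tX, of m m n] abs_diff_le_induced_metric[OF pm tX tX sX, of m n n]
      partial_metric_sym[OF pm sX tX, of n m] partial_metric_sym[OF pm sX tX, of n n]
    by (simp only: abs_le_iff) linarith
  have "(?d \<longlongrightarrow> 0) (sequentially \<times>\<^sub>F sequentially)"
    using tendsto_add_zero[OF tendsto_induced_metric_p_Cauchy tendsto_induced_metric_p_Cauchy, of p s p t] s t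
    unfolding p_Cauchy_seqs_def by (simp add: case_prod_beta')
  then have "((\<lambda>(m, n). p (s m) (t m) - p (s n) (t n)) \<longlongrightarrow> 0) (sequentially \<times>\<^sub>F sequentially)"
    by (rule tendsto_0_if_abs_le[rotated]) (simp add: split_beta bound)
  then have "Cauchy (\<lambda>n. p (s n) (t n))"
    by (rule Cauchy_if_tendsto_diff)
  then show ?thesis
    unfolding limit_dist_def using Cauchy_convergent_iff convergent_LIMSEQ_iff by blast
qed

context
  fixes X p
  assumes pm: "partial_metric X p"
begin

lemma limit_dist_nonneg:
  "s \<in> p_Cauchy_seqs X p \<Longrightarrow> t \<in> p_Cauchy_seqs X p \<Longrightarrow> 0 \<le> limit_dist p s t"
  by (rule LIMSEQ_le_const[OF tendsto_limit_dist[OF pm]])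
    (auto intro: partial_metric_nonneg[OF pm] p_Cauchy_seqsD)

lemma limit_dist_self_le:
  "s \<in> p_Cauchy_seqs X p \<Longrightarrow> t \<in> p_Cauchy_seqs X p \<Longrightarrow> limit_dist p s s \<le> limit_dist p s t"
  by (rule LIMSEQ_le[OF tendsto_limit_dist[OF pm] tendsto_limit_dist[OF pm]])
    (auto intro: partial_metric_self_le[OF pm] p_Cauchy_seqsD)

lemma limit_dist_sym:
  assumes "s \<in> p_Cauchy_seqs X p" "t \<in> p_Cauchy_seqs X p"
  shows "limit_dist p s t = limit_dist p t s"
proof -
  have "(\<lambda>n. p (s n) (t n)) = (\<lambda>n. p (t n) (s n))"
    using partial_metric_sym[OF pm p_Cauchy_seqsD p_Cauchy_seqsD] assms by blast
  then show ?thesis unfolding limit_dist_def by simp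
qed

lemma limit_dist_triangle:
  assumes "s \<in> p_Cauchy_seqs X p" "t \<in> p_Cauchy_seqs X p" "u \<in> p_Cauchy_seqs X p"
  shows "limit_dist p s u + limit_dist p t t \<le> limit_dist p s t + limit_dist p t u"
  using assms
  by (intro LIMSEQ_le[OF tendsto_add tendsto_add, OF tendsto_limit_dist[OF pm] tendsto_limit_dist[OF pm]
        tendsto_limit_dist[OF pm] tendsto_limit_dist[OF pm]])
    (auto intro: partial_metric_triangle[OF pm] p_Cauchy_seqsD)

lemma tendsto_limit_dist_const:
  assumes s: "s \<in> p_Cauchy_seqs X p"
  shows "(\<lambda>k. limit_dist p s (\<lambda>_. s k)) \<longlonglongrightarrow> limit_dist p s s"
  unfolding LIMSEQ_iff real_norm_def
proof (intro allI impI)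
  fix e :: real assume "e > 0"
  then obtain N where N: "\<forall>m\<ge>N. \<forall>n\<ge>N. \<bar>p (s n) (s m) - limit_dist p s s\<bar> < e / 2"
    using tendsto_limit_dist_self[of p s] s
    unfolding p_Cauchy_seqs_def tendsto_iff eventually_prod_sequentially dist_real_def
    by (metis (no_types, lifting) case_prod_conv half_gt_zero mem_Collect_eq)
  have "\<bar>limit_dist p s (\<lambda>_. s k) - limit_dist p s s\<bar> \<le> e / 2" if "k \<ge> N" for k
  proof (rule LIMSEQ_le_const2)
    show "(\<lambda>n. \<bar>p (s n) (s k) - limit_dist p s s\<bar>) \<longlonglongrightarrow> \<bar>limit_dist p s (\<lambda>_. s k) - limit_dist p s s\<bar>"
      using tendsto_limit_dist[OF pm s const_in_p_Cauchy_seqs[OF p_Cauchy_seqsD[OF s]]]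
      by (intro tendsto_intros)
    show "\<exists>N'. \<forall>n\<ge>N'. \<bar>p (s n) (s k) - limit_dist p s s\<bar> \<le> e / 2"
      using N that by (meson less_imp_le)
  qed
  moreover have "e / 2 < e" using \<open>e > 0\<close> by simp
  ultimately show "\<exists>N. \<forall>k\<ge>N. \<bar>limit_dist p s (\<lambda>_. s k) - limit_dist p s s\<bar> < e"
    by (meson le_less_trans)
qed

end

definition limit_equiv :: "('a \<Rightarrow> 'a \<Rightarrow> real) \<Rightarrow> (nat \<Rightarrow> 'a) \<Rightarrow> (nat \<Rightarrow> 'a) \<Rightarrow> bool" where
  "limit_equiv p s t \<longleftrightarrow> limit_dist p s t = limit_dist p s s \<and> limit_dist p s t = limit_dist p t t"

definition limit_class :: "'a set \<Rightarrow> ('a \<Rightarrow> 'a \<Rightarrow> real) \<Rightarrow> (nat \<Rightarrow> 'a) \<Rightarrow> (nat \<Rightarrow> 'a) set" where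
  "limit_class X p s = {t \<in> p_Cauchy_seqs X p. limit_equiv p t s}"

definition completion :: "'a set \<Rightarrow> ('a \<Rightarrow> 'a \<Rightarrow> real) \<Rightarrow> (nat \<Rightarrow> 'a) set set" where
  "completion X p = limit_class X p ` p_Cauchy_seqs X p"

definition completion_dist :: "('a \<Rightarrow> 'a \<Rightarrow> real) \<Rightarrow> (nat \<Rightarrow> 'a) set \<Rightarrow> (nat \<Rightarrow> 'a) set \<Rightarrow> real" where
  "completion_dist p A B = limit_dist p (SOME s. s \<in> A) (SOME t. t \<in> B)"

definition completion_embed :: "'a set \<Rightarrow> ('a \<Rightarrow> 'a \<Rightarrow> real) \<Rightarrow> 'a \<Rightarrow> (nat \<Rightarrow> 'a) set" where
  "completion_embed X p x = limit_class X p (\<lambda>_. x)"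

lemma limit_class_self: "s \<in> p_Cauchy_seqs X p \<Longrightarrow> s \<in> limit_class X p s"
  unfolding limit_class_def limit_equiv_def by simp

context
  fixes X p
  assumes pm: "partial_metric X p"
begin

lemma limit_dist_cong:
  assumes s: "s \<in> p_Cauchy_seqs X p" and s': "s' \<in> p_Cauchy_seqs X p" and t: "t \<in> p_Cauchy_seqs X p"
    and "limit_equiv p s s'"
  shows "limit_dist p s t = limit_dist p s' t"
  using limit_dist_triangle[OF pm s s' t] limit_dist_triangle[OF pm s' s t] limit_dist_sym[OF pm s s'] assms(4)
  unfolding limit_equiv_def by linarith

lemma limit_class_eq:
  assumes s: "s \<in> p_Cauchy_seqs X p" and t: "t \<in> p_Cauchy_seqs X p" and "limit_equiv p s t"
  shows "limit_class X p s = limit_class X p t"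
proof -
  have "limit_equiv p u s \<longleftrightarrow> limit_equiv p u t" if u: "u \<in> p_Cauchy_seqs X p" for u
    using limit_dist_cong[OF s t u \<open>limit_equiv p s t\<close>] \<open>limit_equiv p s t\<close>
      limit_dist_sym[OF pm u s] limit_dist_sym[OF pm u t]
    unfolding limit_equiv_def by auto
  then show ?thesis unfolding limit_class_def by auto
qed

lemma completion_dist_limit_class:
  assumes s: "s \<in> p_Cauchy_seqs X p" and t: "t \<in> p_Cauchy_seqs X p"
  shows "completion_dist p (limit_class X p s) (limit_class X p t) = limit_dist p s t"
proof -
  define s' where "s' = (SOME s'. s' \<in> limit_class X p s)"
  define t' where "t' = (SOME t'. t' \<in> limit_class X p t)"
  have "s' \<in> limit_class X p s" "t' \<in> limit_class X p t"
    unfolding s'_def t'_def using limit_class_self s t by (metis someI)+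
  then have s': "s' \<in> p_Cauchy_seqs X p" "limit_equiv p s' s"
    and t': "t' \<in> p_Cauchy_seqs X p" "limit_equiv p t' t"
    unfolding limit_class_def by auto
  have "limit_dist p s' t' = limit_dist p s t'" using limit_dist_cong[OF s'(1) s t'(1) s'(2)] .
  also have "\<dots> = limit_dist p t' s" using limit_dist_sym[OF pm s t'(1)] .
  also have "\<dots> = limit_dist p t s" using limit_dist_cong[OF t'(1) t s t'(2)] .
  also have "\<dots> = limit_dist p s t" using limit_dist_sym[OF pm t s] .
  finally show ?thesis unfolding completion_dist_def s'_def t'_def .
qed

lemma partial_metric_completion: "partial_metric (completion X p) (completion_dist p)"
  unfolding partial_metric_def
proof (intro conjI ballI impI)
  fix A B assume "A \<in> completion X p" "B \<in> completion X p"
  then obtain s t where s: "s \<in> p_Cauchy_seqs X p" and A: "A = limit_class X p s"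
    and t: "t \<in> p_Cauchy_seqs X p" and B: "B = limit_class X p t"
    unfolding completion_def by blast
  note dist = completion_dist_limit_class
  show "0 \<le> completion_dist p A B"
    unfolding A B dist[OF s t] using limit_dist_nonneg[OF pm s t] .
  show "completion_dist p A A \<le> completion_dist p A B"
    unfolding A B dist[OF s t] dist[OF s s] using limit_dist_self_le[OF pm s t] .
  show "completion_dist p A B = completion_dist p B A"
    unfolding A B dist[OF s t] dist[OF t s] using limit_dist_sym[OF pm s t] .
  assume "completion_dist p A A = completion_dist p A B \<and> completion_dist p A B = completion_dist p B B"
  then have "limit_equiv p s t"
    unfolding A B dist[OF s t] dist[OF s s] dist[OF t t] limit_equiv_def by simp
  then show "A = B"
    unfolding A B using limit_class_eq[OF s t] by blast
next
  fix A B C assume "A \<in> completion X p" "B \<in> completion X p" "C \<in> completion X p"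
  then obtain s t u where s: "s \<in> p_Cauchy_seqs X p" and A: "A = limit_class X p s"
    and t: "t \<in> p_Cauchy_seqs X p" and B: "B = limit_class X p t"
    and u: "u \<in> p_Cauchy_seqs X p" and C: "C = limit_class X p u"
    unfolding completion_def by blast
  show "completion_dist p A C + completion_dist p B B \<le> completion_dist p A B + completion_dist p B C"
    unfolding A B C completion_dist_limit_class[OF s u] completion_dist_limit_class[OF t t]
      completion_dist_limit_class[OF s t] completion_dist_limit_class[OF t u]
    using limit_dist_triangle[OF pm s t u] .
qed

lemma completion_embed_in: "x \<in> X \<Longrightarrow> completion_embed X p x \<in> completion X p"
  unfolding completion_embed_def completion_def by (blast intro: const_in_p_Cauchy_seqs)

lemma completion_dist_embed:
  "x \<in> X \<Longrightarrow> y \<in> X \<Longrightarrow> completion_dist p (completion_embed X p x) (completion_embed X p y) = p x y"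
  unfolding completion_embed_def
  by (simp add: completion_dist_limit_class const_in_p_Cauchy_seqs limit_dist_const)

lemma p_converges_completion_embed:
  assumes s: "s \<in> p_Cauchy_seqs X p"
  shows "p_converges (completion_dist p) (\<lambda>k. completion_embed X p (s k)) (limit_class X p s)"
proof -
  note sk = const_in_p_Cauchy_seqs[OF p_Cauchy_seqsD[OF s]]
  have "(\<lambda>k. p (s k) (s k)) \<longlonglongrightarrow> limit_dist p s s"
    using tendsto_limit_dist[OF pm s s] .
  then show ?thesis
    unfolding p_converges_def completion_embed_def
    using tendsto_limit_dist_const[OF pm s]
    by (simp add: completion_dist_limit_class[OF s sk] completion_dist_limit_class[OF s s]
        completion_dist_limit_class[OF sk sk] limit_dist_const)
qed

lemma p_Cauchy_complete_completion: "p_Cauchy_complete (completion X p) (completion_dist p)"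
proof (rule p_Cauchy_completeI[OF partial_metric_completion])
  show "completion_embed X p ` X \<subseteq> completion X p"
    using completion_embed_in by blast
  show "\<exists>b. range b \<subseteq> completion_embed X p ` X \<and> p_converges (completion_dist p) b A"
    if "A \<in> completion X p" for A
  proof -
    obtain s where s: "s \<in> p_Cauchy_seqs X p" and A: "A = limit_class X p s"
      using \<open>A \<in> completion X p\<close> unfolding completion_def by blast
    have "range (\<lambda>k. completion_embed X p (s k)) \<subseteq> completion_embed X p ` X"
      using p_Cauchy_seqsD[OF s] by blast
    then show ?thesis unfolding A using p_converges_completion_embed[OF s] by blast
  qed
  show "\<exists>A\<in>completion X p. p_converges (completion_dist p) b A"
    if b: "range b \<subseteq> completion_embed X p ` X" and "p_Cauchy (completion_dist p) b" for b
  proof -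
    have "\<forall>k. \<exists>x. x \<in> X \<and> b k = completion_embed X p x"
      using b by blast
    then obtain x where x: "\<And>k. x k \<in> X" and "\<And>k. b k = completion_embed X p (x k)"
      by (metis choice)
    then have b_eq: "b = (\<lambda>k. completion_embed X p (x k))" by blast
    have "p_Cauchy p x"
      using \<open>p_Cauchy (completion_dist p) b\<close> unfolding b_eq p_Cauchy_def
      by (simp add: completion_dist_embed x)
    then have "x \<in> p_Cauchy_seqs X p" unfolding p_Cauchy_seqs_def using x by blast
    then show ?thesis
      unfolding b_eq completion_def using p_converges_completion_embed by blast
  qed
qed

lemma p_dense_completion_embed: "p_dense (completion X p) (completion_dist p) (completion_embed X p ` X)"
  unfolding p_dense_def
proof (intro conjI ballI allI impI)
  show "completion_embed X p ` X \<subseteq> completion X p"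
    using completion_embed_in by blast
  fix A and e :: real assume "A \<in> completion X p" "e > 0"
  then obtain s where s: "s \<in> p_Cauchy_seqs X p" and A: "A = limit_class X p s"
    unfolding completion_def by blast
  have "(\<lambda>k. completion_dist p A (completion_embed X p (s k))) \<longlonglongrightarrow> completion_dist p A A"
    using p_converges_completion_embed[OF s] unfolding A p_converges_def by blast
  then obtain k where "completion_dist p A (completion_embed X p (s k)) < completion_dist p A A + e"
    using \<open>e > 0\<close> unfolding LIMSEQ_iff real_norm_def by (metis abs_less_iff add.commute diff_less_eq order_refl)
  then show "\<exists>B\<in>completion_embed X p ` X. B \<in> pball (completion X p) (completion_dist p) A e"
    unfolding pball_def using completion_embed_in p_Cauchy_seqsD[OF s] by blast
qed

lemma p_Cauchy_completion_completion:
  "p_Cauchy_completion X p (completion X p) (completion_dist p) (completion_embed X p)"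
  unfolding p_Cauchy_completion_def isometric_embedding_def
  by (simp add: partial_metric_completion p_Cauchy_complete_completion p_dense_completion_embed
      image_subset_iff completion_embed_in completion_dist_embed)

end

section \<open>Doubling a partial metric space\<close>

lemma partial_metric_prod:
  assumes pA: "partial_metric A p" and pB: "partial_metric B q"
  shows "partial_metric (A \<times> B) (\<lambda>a b. p (fst a) (fst b) + q (snd a) (snd b))"
  unfolding partial_metric_def
proof (intro conjI ballI impI)
  fix a b assume "a \<in> A \<times> B" "b \<in> A \<times> B"
  then have fst_mem: "fst a \<in> A" "fst b \<in> A" and snd_mem: "snd a \<in> B" "snd b \<in> B" by auto
  note A_le = partial_metric_self_le[OF pA fst_mem] partial_metric_self_le[OF pA fst_mem(2,1)]
    and B_le = partial_metric_self_le[OF pB snd_mem] partial_metric_self_le[OF pB snd_mem(2,1)]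
    and A_sym = partial_metric_sym[OF pA fst_mem] and B_sym = partial_metric_sym[OF pB snd_mem]
  show "0 \<le> p (fst a) (fst b) + q (snd a) (snd b)"
    using partial_metric_nonneg[OF pA fst_mem] partial_metric_nonneg[OF pB snd_mem] by simp
  show "p (fst a) (fst a) + q (snd a) (snd a) \<le> p (fst a) (fst b) + q (snd a) (snd b)"
    using A_le B_le by simp
  show "p (fst a) (fst b) + q (snd a) (snd b) = p (fst b) (fst a) + q (snd b) (snd a)"
    using A_sym B_sym by simp
  assume "p (fst a) (fst a) + q (snd a) (snd a) = p (fst a) (fst b) + q (snd a) (snd b)
    \<and> p (fst a) (fst b) + q (snd a) (snd b) = p (fst b) (fst b) + q (snd b) (snd b)"
  then have "p (fst a) (fst a) = p (fst a) (fst b) \<and> p (fst a) (fst b) = p (fst b) (fst b)"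
    and "q (snd a) (snd a) = q (snd a) (snd b) \<and> q (snd a) (snd b) = q (snd b) (snd b)"
    using A_le B_le A_sym B_sym by linarith+
  then show "a = b"
    using partial_metric_eqI[OF pA fst_mem] partial_metric_eqI[OF pB snd_mem] by (simp add: prod_eq_iff)
next
  fix a b c assume "a \<in> A \<times> B" "b \<in> A \<times> B" "c \<in> A \<times> B"
  then show "p (fst a) (fst c) + q (snd a) (snd c) + (p (fst b) (fst b) + q (snd b) (snd b))
      \<le> p (fst a) (fst b) + q (snd a) (snd b) + (p (fst b) (fst c) + q (snd b) (snd c))"
    using partial_metric_triangle[OF pA, of "fst a" "fst b" "fst c"]
      partial_metric_triangle[OF pB, of "snd a" "snd b" "snd c"] by auto
qed

lemma partial_metric_max: "partial_metric {0::real..} max"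
  unfolding partial_metric_def by auto

definition layer_dist :: "('b \<Rightarrow> 'b \<Rightarrow> real) \<Rightarrow> 'b \<times> real \<Rightarrow> 'b \<times> real \<Rightarrow> real" where
  "layer_dist q a b = q (fst a) (fst b) + max (snd a) (snd b)"

context
  fixes Y q
  assumes pm: "partial_metric Y q"
begin

lemma partial_metric_layer_dist: "partial_metric (Y \<times> {0, 1}) (layer_dist q)"
proof -
  have "partial_metric {0, 1::real} max"
    by (rule partial_metric_subset[OF partial_metric_max]) auto
  from partial_metric_prod[OF pm this] show ?thesis
    by (simp add: layer_dist_def[abs_def])
qed

lemma abs_layer_diff_le_induced_metric:
  assumes "a \<in> Y \<times> {0, 1}" "b \<in> Y \<times> {0, 1}"
  shows "\<bar>snd a - snd b\<bar> \<le> induced_metric (layer_dist q) a b"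
proof -
  have a: "fst a \<in> Y" and b: "fst b \<in> Y" using assms by auto
  then show ?thesis
    using partial_metric_self_le[OF pm a b] partial_metric_self_le[OF pm b a] partial_metric_sym[OF pm a b]
    unfolding induced_metric_def layer_dist_def by (simp add: abs_if max_def)
qed

lemma p_Cauchy_layer_eventually_const:
  assumes z: "\<And>n. z n \<in> Y \<times> {0, 1}" and "p_Cauchy (layer_dist q) z"
  obtains N where "\<And>n. n \<ge> N \<Longrightarrow> snd (z n) = snd (z N)"
proof -
  have "eventually (\<lambda>(n, m). induced_metric (layer_dist q) (z n) (z m) < 1) (sequentially \<times>\<^sub>F sequentially)"
    using order_tendstoD(2)[OF tendsto_induced_metric_p_Cauchy[OF assms(2)], of 1]
    by (simp add: case_prod_beta')
  then obtain N where "\<forall>m\<ge>N. \<forall>n\<ge>N. induced_metric (layer_dist q) (z n) (z m) < 1"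
    unfolding eventually_prod_sequentially by auto
  then have "\<bar>snd (z n) - snd (z N)\<bar> < 1" if "n \<ge> N" for n
    using abs_layer_diff_le_induced_metric[OF z z, of n N] that by fastforce
  moreover have "snd (z n) \<in> {0, 1}" for n
    using z[of n] by (simp add: mem_Times_iff)
  ultimately have "snd (z n) = snd (z N)" if "n \<ge> N" for n
    using that by (smt (verit) insert_iff singleton_iff)
  then show ?thesis using that by blast
qed

lemma p_Cauchy_complete_layers:
  assumes complete: "p_Cauchy_complete Y q"
  shows "p_Cauchy_complete (Y \<times> {0, 1}) (layer_dist q)"
  unfolding p_Cauchy_complete_def
proof (intro allI impI)
  fix z assume "(\<forall>n. z n \<in> Y \<times> {0, 1}) \<and> p_Cauchy (layer_dist q) z"
  then have z: "\<And>n. z n \<in> Y \<times> {0, 1}" and cauchy: "p_Cauchy (layer_dist q) z" by auto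
  obtain N where N: "\<And>n. n \<ge> N \<Longrightarrow> snd (z n) = snd (z N)"
    using p_Cauchy_layer_eventually_const[OF z cauchy] by blast
  define c where "c = snd (z N)"
  define w where "w n = fst (z n)" for n
  have z_eq: "z n = (w n, c)" if "n \<ge> N" for n
    using N[OF that] unfolding c_def w_def by (simp add: prod_eq_iff)
  obtain L where L: "((\<lambda>(n, m). layer_dist q (z n) (z m)) \<longlongrightarrow> L) (sequentially \<times>\<^sub>F sequentially)"
    using cauchy p_Cauchy_iff_tendsto by blast
  have "\<forall>\<^sub>F (n, m) in sequentially \<times>\<^sub>F sequentially. layer_dist q (z n) (z m) = q (w n) (w m) + c"
    unfolding eventually_prod_sequentially by (auto intro!: exI[of _ N] simp: layer_dist_def z_eq)
  then have "((\<lambda>(n, m). q (w n) (w m) + c) \<longlongrightarrow> L) (sequentially \<times>\<^sub>F sequentially)"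
    by (rule Lim_transform_eventually[OF L eventually_mono]) auto
  from tendsto_diff[OF this tendsto_const[of c]]
  have "((\<lambda>(n, m). q (w n) (w m)) \<longlongrightarrow> L - c) (sequentially \<times>\<^sub>F sequentially)"
    by (simp add: case_prod_beta')
  then have "p_Cauchy q w" unfolding p_Cauchy_iff_tendsto by blast
  moreover have "\<And>n. w n \<in> Y" using z unfolding w_def by (simp add: mem_Times_iff)
  ultimately obtain y where "y \<in> Y" "p_converges q w y"
    using complete unfolding p_Cauchy_complete_def by blast
  have "\<forall>\<^sub>F n in sequentially. z n = (w n, c)"
    unfolding eventually_sequentially using z_eq by blast
  then have "p_converges (layer_dist q) z (y, c) \<longleftrightarrow> p_converges (layer_dist q) (\<lambda>n. (w n, c)) (y, c)"
    unfolding p_converges_def by (intro conj_cong tendsto_cong) (auto elim: eventually_mono)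
  moreover have "p_converges (layer_dist q) (\<lambda>n. (w n, c)) (y, c)"
    using \<open>p_converges q w y\<close> unfolding p_converges_def layer_dist_def by (auto intro: tendsto_add)
  ultimately have "p_converges (layer_dist q) z (y, c)" by blast
  moreover have "(y, c) \<in> Y \<times> {0, 1}" using \<open>y \<in> Y\<close> z[of N] unfolding c_def by auto
  ultimately show "\<exists>y\<in>Y \<times> {0, 1}. p_converges (layer_dist q) z y" by blast
qed

end

lemma p_Cauchy_completion_layers:
  assumes "p_Cauchy_completion X p Y q i"
  shows "p_Cauchy_completion X p (Y \<times> {0, 1}) (layer_dist q) (\<lambda>x. (i x, 0))"
proof -
  have pm: "partial_metric Y q" and complete: "p_Cauchy_complete Y q"
    and emb: "isometric_embedding X p Y q i" and dense: "p_dense Y q (i ` X)"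
    using assms unfolding p_Cauchy_completion_def by auto
  have emb': "isometric_embedding X p (Y \<times> {0, 1}) (layer_dist q) (\<lambda>x. (i x, 0))"
    using emb unfolding isometric_embedding_def layer_dist_def by auto
  have approx: "\<exists>b\<in>(\<lambda>x. (i x, 0)) ` X. b \<in> pball (Y \<times> {0, 1}) (layer_dist q) a e"
    if a: "a \<in> Y \<times> {0, 1}" and "e > 0" for a e
  proof -
    have "fst a \<in> Y" using a by auto
    then obtain x where "x \<in> X" and x: "i x \<in> pball Y q (fst a) e"
      using dense \<open>e > 0\<close> unfolding p_dense_def by blast
    have "layer_dist q a (i x, 0) < layer_dist q a a + e"
      using x a unfolding pball_def layer_dist_def by auto
    moreover have "(i x, 0) \<in> Y \<times> {0, 1}"
      using x unfolding pball_def by simp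
    ultimately have "(i x, 0) \<in> pball (Y \<times> {0, 1}) (layer_dist q) a e"
      unfolding pball_def by simp
    then show ?thesis
      using \<open>x \<in> X\<close> by (blast intro: rev_image_eqI)
  qed
  have "p_dense (Y \<times> {0, 1}) (layer_dist q) ((\<lambda>x. (i x, 0)) ` X)"
    unfolding p_dense_def
  proof (intro conjI ballI allI impI approx)
    show "(\<lambda>x. (i x, 0)) ` X \<subseteq> Y \<times> {0, 1}"
      using emb' unfolding isometric_embedding_def by auto
  qed
  then show ?thesis
    using partial_metric_layer_dist[OF pm] p_Cauchy_complete_layers[OF pm complete] emb'
    unfolding p_Cauchy_completion_def by blast
qed

lemma not_p_sym_dense_layers:
  assumes pm: "partial_metric Y q" and "D \<subseteq> Y \<times> {0}" and "y \<in> Y"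
  shows "\<not> p_sym_dense (Y \<times> {0, 1}) (layer_dist q) D"
proof
  assume "p_sym_dense (Y \<times> {0, 1}) (layer_dist q) D"
  moreover have "(y, 1) \<in> Y \<times> {0, 1}" using \<open>y \<in> Y\<close> by simp
  ultimately have "\<forall>\<epsilon>>0. \<exists>b\<in>D. (y, 1) \<in> pball (Y \<times> {0, 1}) (layer_dist q) b \<epsilon>"
    unfolding p_sym_dense_def by blast
  then obtain b where "b \<in> D" and "(y, 1) \<in> pball (Y \<times> {0, 1}) (layer_dist q) b 1"
    using zero_less_one by blast
  moreover from \<open>b \<in> D\<close> have "fst b \<in> Y" "snd b = 0" using assms(2) by auto
  ultimately show False
    using partial_metric_self_le[OF pm, of "fst b" y] \<open>y \<in> Y\<close> unfolding pball_def layer_dist_def by auto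
qed

theorem theorem1p4:
  fixes X :: "'a set" and p :: "'a \<Rightarrow> 'a \<Rightarrow> real"
  assumes "partial_metric X p" and "X \<noteq> {}"
  shows "\<exists>(Y :: ((nat \<Rightarrow> 'a) set \<times> real) set) q i.
           p_Cauchy_completion X p Y q i \<and> \<not> p_sym_dense Y q (i ` X)"
proof -
  let ?Y = "completion X p" and ?q = "completion_dist p" and ?i = "completion_embed X p"
  obtain x0 where "x0 \<in> X" using assms(2) by blast
  have "p_Cauchy_completion X p (?Y \<times> {0, 1}) (layer_dist ?q) (\<lambda>x. (?i x, 0))"
    using p_Cauchy_completion_layers[OF p_Cauchy_completion_completion[OF assms(1)]] .
  moreover have "(\<lambda>x. (?i x, 0)) ` X \<subseteq> ?Y \<times> {0}"
    using completion_embed_in[OF assms(1)] by blast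
  then have "\<not> p_sym_dense (?Y \<times> {0, 1}) (layer_dist ?q) ((\<lambda>x. (?i x, 0)) ` X)"
    using not_p_sym_dense_layers[OF partial_metric_completion[OF assms(1)]]
      completion_embed_in[OF assms(1) \<open>x0 \<in> X\<close>] by blast
  ultimately show ?thesis by blast
qed

end
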